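(* For all integers $n\geq 0$, $i\geq 1$ and $k\geq 3$, \begin{align*} \bar a_{2^ki-2^{k-1}-2}(8n+5)&\equiv 0 \pmod{2^{k+1}},\\ \bar a_{2^ki-2^{k-1}-2}(8n+7)&\equiv 0 \pmod{2^{k+2}}. \end{align*}
   Context: For an integer $k\geq 1$ let $f_k:=\prod_{n\geq 1}(1-q^{kn})$. For an integer $c\geq1$, the generalized overcubic partition function $\bar a_c(n)$ is defined by the generating function $\sum_{n\geq 0}\bar a_c(n)q^n=\dfrac{f_4^{c-1}}{f_1^2f_2^{2c-3}}$. *)

theory Defs
  imports "HOL-Computational_Algebra.Formal_Power_Series"
begin

text \<open>f_k = prod_{m>=1} (1 - q^{km}) as a formal power series over the rationals.
  Its n-th coefficient is the n-th coefficient of the finite product over m = 1..n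
  (the factors with m > n do not affect coefficients of degree at most n when k >= 1).\<close>
definition eta_fps :: "nat \<Rightarrow> rat fps" where
  "eta_fps k = Abs_fps (\<lambda>n. fps_nth (\<Prod>m\<in>{1..n}. (1 - fps_X ^ (k * m))) n)"

text \<open>Generating function f_4^(c-1) / (f_1^2 f_2^(2c-3)); for c = 1 the exponent
  2c-3 = -1, i.e. the factor f_2 moves to the numerator.\<close>
definition overcubic_gf :: "nat \<Rightarrow> rat fps" where
  "overcubic_gf c = eta_fps 4 ^ (c - 1) * inverse (eta_fps 1 ^ 2) *
     (if c = 1 then eta_fps 2 else inverse (eta_fps 2 ^ (2 * c - 3)))"

definition abar :: "nat \<Rightarrow> nat \<Rightarrow> rat" where
  "abar c n = fps_nth (overcubic_gf c) n"

end

theory Submission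
  imports Defs
begin

(* By Gauss's identity f_k^2 = f_{2k} phi(-q^k), the limit of a finite identity coming from the
   q-binomial theorem, and by phi(q) phi(-q) = phi(-q^2)^2, the generating function equals
   phi(q) / phi(-q^2)^(c+1) for c >= 2.  For c = 2^k i - 2^(k-1) - 2 we have c + 2 = 2^(k-1) m
   with m odd, so the series is phi(q) G with G = phi(-q^2)^(1 - 2^(k-1) m), a series in q^2.
   Write phi(q) = 1 + 2B and phi(-q^2) = 1 + 2A, so that B lives on squares and A on doubled
   squares.  Repeated squaring gives phi(-q^2)^(-2^(k-1) m) == 1 + 2^k (A + A^2) mod 2^(k+1).
   For odd d the coefficient of q^d is that of 2BG, and BG == BR + 2^k B (A + A^2) mod 2^(k+1)
   with R = phi(-q^2).  As squares are 0, 1, 4 and doubled squares 0, 2 modulo 8, BR has no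
   terms of degree 5 or 7 modulo 8 and B (A + A^2) none of degree 7 modulo 8. *)

unbundle fps_syntax

section \<open>Agreement of power series below a degree\<close>

definition fps_eq_below :: "nat \<Rightarrow> 'a::zero fps \<Rightarrow> 'a fps \<Rightarrow> bool" where
  "fps_eq_below D F G \<longleftrightarrow> (\<forall>i<D. F $ i = G $ i)"

lemma fps_eq_below_refl [simp]: "fps_eq_below D F F"
  by (simp add: fps_eq_below_def)

lemma fps_eq_below_sym: "fps_eq_below D F G \<Longrightarrow> fps_eq_below D G F"
  by (simp add: fps_eq_below_def)

lemma fps_eq_below_trans [trans]:
  "fps_eq_below D F G \<Longrightarrow> fps_eq_below D G H \<Longrightarrow> fps_eq_below D F H"
  by (simp add: fps_eq_below_def)

lemma fps_eq_below_mono: "fps_eq_below D F G \<Longrightarrow> E \<le> D \<Longrightarrow> fps_eq_below E F G"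
  by (simp add: fps_eq_below_def)

lemma fps_eq_below_add:
  "fps_eq_below D F G \<Longrightarrow> fps_eq_below D F' G' \<Longrightarrow> fps_eq_below D (F + F') (G + G')"
  by (simp add: fps_eq_below_def)

lemma fps_eq_below_mult:
  fixes F G :: "'a::comm_semiring_0 fps"
  assumes "fps_eq_below D F G" "fps_eq_below D F' G'"
  shows "fps_eq_below D (F * F') (G * G')"
  using assms unfolding fps_eq_below_def fps_mult_nth by (auto intro!: sum.cong)

lemma fps_eq_below_power:
  fixes F G :: "'a::comm_semiring_1 fps"
  shows "fps_eq_below D F G \<Longrightarrow> fps_eq_below D (F ^ n) (G ^ n)"
  by (induction n) (auto intro: fps_eq_below_mult)

lemma fps_eq_below_sum:
  "(\<And>i. i \<in> I \<Longrightarrow> fps_eq_below D (f i) (g i)) \<Longrightarrow> fps_eq_below D (sum f I) (sum g I)"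
  by (induction I rule: infinite_finite_induct) (auto intro: fps_eq_below_add)

lemma fps_eq_below_X_power_mult:
  "D \<le> a \<Longrightarrow> fps_eq_below D (fps_X ^ a * F) (0 :: 'a::comm_ring_1 fps)"
  by (simp add: fps_eq_below_def fps_X_power_mult_nth)

lemma fps_eq_below_cancel:
  fixes F G P :: "'a::field fps"
  assumes "fps_eq_below D (P * F) (P * G)" "P $ 0 \<noteq> 0"
  shows "fps_eq_below D F G"
proof -
  have cancel: "inverse P * (P * H) = H" for H
    using inverse_mult_eq_1[OF assms(2)] by (simp add: mult.assoc[symmetric])
  have "fps_eq_below D (inverse P * (P * F)) (inverse P * (P * G))"
    using fps_eq_below_mult[OF fps_eq_below_refl assms(1)] .
  then show ?thesis by (simp only: cancel)
qed

lemma fps_eq_iff_eq_below: "F = G \<longleftrightarrow> (\<forall>D. fps_eq_below D F G)"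
  by (auto simp: fps_eq_below_def fps_eq_iff)

section \<open>Gaussian binomial coefficients\<close>

fun qbinom :: "'a::comm_ring_1 \<Rightarrow> nat \<Rightarrow> nat \<Rightarrow> 'a" where
  "qbinom p 0 j = (if j = 0 then 1 else 0)"
| "qbinom p (Suc M) 0 = 1"
| "qbinom p (Suc M) (Suc j) = qbinom p M (Suc j) + p ^ (M - j) * qbinom p M j"

lemma qbinom_eq_0: "M < j \<Longrightarrow> qbinom p M j = 0"
  by (induction p M j rule: qbinom.induct) auto

lemma qbinom_0_right [simp]: "qbinom p M 0 = 1"
  by (cases M) simp_all

lemma qbinom_diag [simp]: "qbinom p M M = 1"
  by (induction M) (auto simp: qbinom_eq_0)

lemma sum_lessThan_choose_two: "(\<Sum>i<n. i) = n choose 2"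
  by (induction n) (simp_all add: numeral_2_eq_2)

theorem qbinom_theorem:
  fixes p y z :: "'a::comm_ring_1"
  shows "(\<Prod>i<M. y + z * p ^ i) = (\<Sum>j\<le>M. p ^ (j choose 2) * qbinom p M j * z ^ j * y ^ (M - j))"
proof (induction M)
  case 0
  show ?case by (simp add: numeral_2_eq_2)
next
  case (Suc M)
  define c where "c j = p ^ (j choose 2) * z ^ j * y ^ (Suc M - j)" for j
  have shift: "(\<Sum>j\<le>Suc M. f j) = f 0 + (\<Sum>j\<le>M. f (Suc j))" for f :: "nat \<Rightarrow> 'a"
    by (rule sum.atMost_Suc_shift)
  have "(\<Prod>i<Suc M. y + z * p ^ i) =
      (\<Sum>j\<le>M. p ^ (j choose 2) * qbinom p M j * z ^ j * y ^ (M - j)) * (y + z * p ^ M)"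
    using Suc by simp
  also have "\<dots> = (\<Sum>j\<le>M. qbinom p M j * c j) + (\<Sum>j\<le>M. p ^ (M - j) * qbinom p M j * c (Suc j))"
    unfolding distrib_left sum_distrib_right
  proof (intro arg_cong2[where f = "(+)"] sum.cong)
    fix j assume "j \<in> {..M}"
    then have "p ^ M = p ^ j * p ^ (M - j)" and "Suc M - j = Suc (M - j)"
      by (simp_all flip: power_add)
    moreover have "p ^ (Suc j choose 2) = p ^ j * p ^ (j choose 2)"
      by (simp add: numeral_2_eq_2 power_add)
    ultimately show "p ^ (j choose 2) * qbinom p M j * z ^ j * y ^ (M - j) * y = qbinom p M j * c j"
      and "p ^ (j choose 2) * qbinom p M j * z ^ j * y ^ (M - j) * (z * p ^ M) =
        p ^ (M - j) * qbinom p M j * c (Suc j)"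
      unfolding c_def by (simp_all add: mult_ac)
  qed simp_all
  also have "(\<Sum>j\<le>M. qbinom p M j * c j) = (\<Sum>j\<le>Suc M. qbinom p M j * c j)"
    by (simp add: qbinom_eq_0)
  also have "\<dots> + (\<Sum>j\<le>M. p ^ (M - j) * qbinom p M j * c (Suc j)) = (\<Sum>j\<le>Suc M. qbinom p (Suc M) j * c j)"
    unfolding shift by (simp add: sum.distrib algebra_simps)
  finally show ?case by (simp add: c_def mult_ac)
qed

definition qpoch :: "'a::comm_ring_1 \<Rightarrow> nat \<Rightarrow> 'a" where
  "qpoch p a = (\<Prod>i\<in>{1..a}. 1 - p ^ i)"

lemma qpoch_0 [simp]: "qpoch p 0 = 1"
  by (simp add: qpoch_def)

lemma qpoch_Suc: "qpoch p (Suc a) = qpoch p a * (1 - p ^ Suc a)"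
  by (simp add: qpoch_def prod.nat_ivl_Suc' mult.commute)

lemma qbinom_mult_qpoch:
  "j \<le> M \<Longrightarrow> qbinom p M j * qpoch p j * qpoch p (M - j) = qpoch p M"
proof (induction p M j rule: qbinom.induct)
  case (3 p M j)
  show ?case
  proof (cases "j = M")
    case True
    then show ?thesis by (simp add: qbinom_eq_0 qpoch_Suc)
  next
    case False
    with "3.prems" have j: "Suc j \<le> M" by simp
    then have "M - j = Suc (M - Suc j)" by simp
    then have "qbinom p (Suc M) (Suc j) * qpoch p (Suc j) * qpoch p (Suc M - Suc j) =
        qbinom p M (Suc j) * qpoch p (Suc j) * qpoch p (M - Suc j) * (1 - p ^ (M - j))
        + p ^ (M - j) * (qbinom p M j * qpoch p j * qpoch p (M - j)) * (1 - p ^ Suc j)"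
      by (simp add: qpoch_Suc algebra_simps)
    also have "\<dots> = qpoch p M * (1 - p ^ Suc M)"
      using "3.IH" j by (simp add: algebra_simps flip: power_add)
    finally show ?thesis by (simp add: qpoch_Suc)
  qed
qed simp_all

lemma qpoch_double:
  "qpoch x (2 * n) = qpoch (x\<^sup>2) n * (\<Prod>i<n. 1 - x ^ (2 * i + 1))"
proof (induction n)
  case (Suc n)
  have "qpoch x (2 * Suc n) = qpoch x (2 * n) * (1 - x ^ (2 * n + 1)) * (1 - x ^ (2 * Suc n))"
    by (simp add: qpoch_Suc)
  also have "x ^ (2 * Suc n) = (x\<^sup>2) ^ Suc n"
    by (simp only: power_mult)
  finally show ?case
    using Suc by (simp add: qpoch_Suc mult_ac)
qed simp

section \<open>A finite form of Gauss's identity\<close>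

lemma double_choose_two: "2 * (j choose 2) = j * (j - 1)"
  by (induction j) (auto simp: numeral_2_eq_2 algebra_simps)

lemma finite_gauss_exponent:
  assumes "\<bar>t\<bar> \<le> int n"
  shows "2 * (nat (int n + t) choose 2) + (2 * n - 1) * (2 * n - nat (int n + t)) =
    2 * (n choose 2) + n * (2 * n - 1) + nat \<bar>t\<bar> ^ 2"
proof (cases "n = 0")
  case False
  define j where "j = nat (int n + t)"
  have j: "int j = int n + t" "j \<le> 2 * n"
    using assms by (auto simp: j_def)
  have "int (j * (j - 1)) = int j * (int j - 1)"
    by (cases j) (auto simp: algebra_simps)
  moreover have "int (n * (n - 1)) = int n * (int n - 1)"
    by (cases n) (auto simp: algebra_simps)
  moreover have "int ((2 * n - 1) * (2 * n - j)) = (2 * int n - 1) * (2 * int n - int j)"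
    using j False by (simp add: of_nat_diff)
  moreover have "int (n * (2 * n - 1)) = int n * (2 * int n - 1)"
    using False by (simp add: of_nat_diff)
  ultimately have "int (j * (j - 1) + (2 * n - 1) * (2 * n - j)) =
      int (n * (n - 1) + n * (2 * n - 1) + nat \<bar>t\<bar> ^ 2)"
    unfolding of_nat_add using j(1) by (simp add: algebra_simps power2_eq_square)
  then show ?thesis
    unfolding double_choose_two j_def[symmetric] of_nat_eq_iff .
qed (use assms in simp)

lemma sum_atMost_double_reindex:
  "(\<Sum>j\<le>2 * n. f j) = (\<Sum>t\<in>{-int n..int n}. f (nat (int n + t)))"
  by (rule sum.reindex_bij_witness[where j = "\<lambda>j. int j - int n" and i = "\<lambda>t. nat (int n + t)"])
    auto

lemma prod_power_diff_lower_half: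
  fixes x :: "'a::comm_ring_1"
  shows "(\<Prod>i<n. x ^ (2 * n - 1) - x ^ (2 * i)) =
    (-1) ^ n * x ^ (2 * (n choose 2)) * (\<Prod>i<n. 1 - x ^ (2 * i + 1))"
proof -
  let ?f = "\<lambda>i. x ^ (2 * n - 1) - x ^ (2 * i)"
  have "(\<Prod>i<n. ?f i) = (\<Prod>i<n. ?f (n - Suc i))"
    by (rule prod.nat_diff_reindex[symmetric])
  also have "\<dots> = (\<Prod>i<n. (-1) * x ^ (2 * (n - Suc i)) * (1 - x ^ (2 * i + 1)))"
  proof (rule prod.cong)
    fix i assume "i \<in> {..<n}"
    then have "2 * n - 1 = 2 * (n - Suc i) + (2 * i + 1)" by simp
    then have "x ^ (2 * n - 1) = x ^ (2 * (n - Suc i)) * x ^ (2 * i + 1)"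
      by (simp only: power_add)
    then show "?f (n - Suc i) = (-1) * x ^ (2 * (n - Suc i)) * (1 - x ^ (2 * i + 1))"
      by (simp add: algebra_simps)
  qed simp
  also have "\<dots> = (\<Prod>i<n. -1) * (\<Prod>i<n. x ^ (2 * (n - Suc i))) * (\<Prod>i<n. 1 - x ^ (2 * i + 1))"
    by (simp only: prod.distrib)
  also have "(\<Prod>i<n. x ^ (2 * (n - Suc i))) = x ^ (2 * (n choose 2))"
    using prod.nat_diff_reindex[of "\<lambda>i. x ^ (2 * i)" n]
    by (simp add: power_sum sum_distrib_left flip: sum_lessThan_choose_two)
  finally show ?thesis
    by simp
qed

lemma prod_power_diff_upper_half:
  fixes x :: "'a::comm_ring_1"
  shows "(\<Prod>i\<in>{n..<2 * n}. x ^ (2 * n - 1) - x ^ (2 * i)) =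
    x ^ (n * (2 * n - 1)) * (\<Prod>i<n. 1 - x ^ (2 * i + 1))"
proof -
  let ?f = "\<lambda>i. x ^ (2 * n - 1) - x ^ (2 * i)"
  have "(\<Prod>i\<in>{n..<2 * n}. ?f i) = (\<Prod>i<n. ?f (i + n))"
    using prod.shift_bounds_nat_ivl[of ?f 0 n n] by (simp add: mult_2 lessThan_atLeast0)
  also have "\<dots> = (\<Prod>i<n. x ^ (2 * n - 1) * (1 - x ^ (2 * i + 1)))"
  proof (rule prod.cong)
    fix i assume "i \<in> {..<n}"
    then have "2 * (i + n) = (2 * n - 1) + (2 * i + 1)" by simp
    then have "x ^ (2 * (i + n)) = x ^ (2 * n - 1) * x ^ (2 * i + 1)"
      by (simp only: power_add)
    then show "?f (i + n) = x ^ (2 * n - 1) * (1 - x ^ (2 * i + 1))"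
      by (simp add: algebra_simps)
  qed simp
  also have "\<dots> = x ^ (n * (2 * n - 1)) * (\<Prod>i<n. 1 - x ^ (2 * i + 1))"
    by (simp add: prod.distrib mult.commute flip: power_mult)
  finally show ?thesis .
qed

lemma prod_power_diff_split:
  fixes x :: "'a::comm_ring_1"
  shows "(\<Prod>i<2 * n. x ^ (2 * n - 1) - x ^ (2 * i)) =
    (-1) ^ n * x ^ (2 * (n choose 2) + n * (2 * n - 1)) * (\<Prod>i<n. 1 - x ^ (2 * i + 1))\<^sup>2"
proof -
  have split: "{..<2 * n} = {..<n} \<union> {n..<2 * n}"
    by auto
  have "(\<Prod>i<2 * n. x ^ (2 * n - 1) - x ^ (2 * i)) =
      (\<Prod>i<n. x ^ (2 * n - 1) - x ^ (2 * i)) * (\<Prod>i\<in>{n..<2 * n}. x ^ (2 * n - 1) - x ^ (2 * i))"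
    unfolding split by (rule prod.union_disjoint) auto
  then show ?thesis
    unfolding prod_power_diff_lower_half prod_power_diff_upper_half
    by (simp add: power_add power2_eq_square mult_ac)
qed

lemma neg_one_power_shift:
  assumes "\<bar>t\<bar> \<le> int n"
  shows "(-1 :: 'a::ring_1) ^ nat (int n + t) = (-1) ^ n * (-1) ^ nat \<bar>t\<bar>"
proof -
  have "nat (int n + t) + (n + nat \<bar>t\<bar>) = 2 * (n + nat (max t 0))"
    using assms by (cases "t \<ge> 0") auto
  then have "even (nat (int n + t) + (n + nat \<bar>t\<bar>))"
    by (metis dvd_triv_left)
  then have "even (nat (int n + t)) \<longleftrightarrow> even (n + nat \<bar>t\<bar>)"
    by (metis even_add)
  then show ?thesis
    by (simp add: minus_one_power_iff flip: power_add)
qed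

theorem finite_gauss_identity:
  fixes x :: "'a::idom"
  assumes "x \<noteq> 0"
  shows "(\<Prod>i<n. 1 - x ^ (2 * i + 1))\<^sup>2 =
    (\<Sum>t\<in>{-int n..int n}. (-1) ^ nat \<bar>t\<bar> * x ^ (nat \<bar>t\<bar> ^ 2) * qbinom (x\<^sup>2) (2 * n) (nat (int n + t)))"
  (is "?O\<^sup>2 = (\<Sum>t\<in>_. ?term t)")
proof -
  define E where "E = 2 * (n choose 2) + n * (2 * n - 1)"
  have "(-1) ^ n * x ^ E * ?O\<^sup>2 = (\<Prod>i<2 * n. x ^ (2 * n - 1) + (-1) * (x\<^sup>2) ^ i)"
    unfolding E_def prod_power_diff_split[symmetric] by (simp flip: power_mult)
  also have "\<dots> = (\<Sum>j\<le>2 * n. (x\<^sup>2) ^ (j choose 2) * qbinom (x\<^sup>2) (2 * n) j * (-1) ^ j *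
      (x ^ (2 * n - 1)) ^ (2 * n - j))"
    by (rule qbinom_theorem)
  also have "\<dots> = (\<Sum>t\<in>{-int n..int n}. (-1) ^ n * x ^ E * ?term t)"
    unfolding sum_atMost_double_reindex
  proof (rule sum.cong)
    fix t assume "t \<in> {-int n..int n}"
    then have t: "\<bar>t\<bar> \<le> int n" by auto
    have "(x\<^sup>2) ^ (nat (int n + t) choose 2) * (x ^ (2 * n - 1)) ^ (2 * n - nat (int n + t)) =
        x ^ E * x ^ (nat \<bar>t\<bar> ^ 2)"
      using finite_gauss_exponent[OF t] unfolding E_def by (simp flip: power_mult power_add)
    then show "(x\<^sup>2) ^ (nat (int n + t) choose 2) * qbinom (x\<^sup>2) (2 * n) (nat (int n + t)) *
        (-1) ^ nat (int n + t) * (x ^ (2 * n - 1)) ^ (2 * n - nat (int n + t)) =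
        (-1) ^ n * x ^ E * ?term t"
      unfolding neg_one_power_shift[OF t] by (simp add: mult_ac)
  qed simp
  also have "\<dots> = (-1) ^ n * x ^ E * (\<Sum>t\<in>{-int n..int n}. ?term t)"
    by (simp add: sum_distrib_left)
  finally show ?thesis
    using assms by simp
qed

section \<open>Theta series\<close>

text \<open>\<open>theta s k\<close> is \<open>\<Sum>t\<in>\<int>. s^|t| q^(k t^2)\<close>; thus \<open>theta 1 1\<close>, \<open>theta (-1) 1\<close> and
  \<open>theta (-1) 2\<close> are Ramanujan's \<open>\<phi>(q)\<close>, \<open>\<phi>(-q)\<close> and \<open>\<phi>(-q^2)\<close>.\<close>

definition theta :: "'a::comm_ring_1 \<Rightarrow> nat \<Rightarrow> 'a fps" where
  "theta s k = Abs_fps (\<lambda>e. \<Sum>t\<in>{-int e..int e}. if k * nat \<bar>t\<bar> ^ 2 = e then s ^ nat \<bar>t\<bar> else 0)"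

lemma theta_nth_0 [simp]: "theta s k $ 0 = 1"
  by (simp add: theta_def)

definition theta_poly :: "'a::comm_ring_1 \<Rightarrow> nat \<Rightarrow> nat \<Rightarrow> 'a fps" where
  "theta_poly s k n = (\<Sum>t\<in>{-int n..int n}. fps_const (s ^ nat \<bar>t\<bar>) * fps_X ^ (k * nat \<bar>t\<bar> ^ 2))"

lemma fps_sum_monomials_nth:
  "(\<Sum>x\<in>S. fps_const (c x) * fps_X ^ (g x)) $ e = (\<Sum>x\<in>S. if g x = e then c x else (0::'a::comm_ring_1))"
  unfolding fps_sum_nth by (intro sum.cong) auto

lemma theta_poly_nth:
  "theta_poly s k n $ e = (\<Sum>t\<in>{-int n..int n}. if k * nat \<bar>t\<bar> ^ 2 = e then s ^ nat \<bar>t\<bar> else 0)"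
  unfolding theta_poly_def by (rule fps_sum_monomials_nth)

lemma le_mult_power2: "k \<ge> 1 \<Longrightarrow> (m::nat) \<le> k * m ^ 2"
  by (metis le_trans mult_1 mult_le_mono1 power2_nat_le_imp_le order_refl)

lemma fps_eq_below_theta_poly:
  assumes "k \<ge> 1"
  shows "fps_eq_below (Suc n) (theta_poly s k n) (theta s k)"
  unfolding fps_eq_below_def
proof (intro allI impI)
  fix e assume "e < Suc n"
  have "theta_poly s k n $ e =
      (\<Sum>t\<in>{-int e..int e}. if k * nat \<bar>t\<bar> ^ 2 = e then s ^ nat \<bar>t\<bar> else 0)"
    unfolding theta_poly_nth
  proof (rule sum.mono_neutral_right)
    show "\<forall>t\<in>{-int n..int n} - {-int e..int e}. (if k * nat \<bar>t\<bar> ^ 2 = e then s ^ nat \<bar>t\<bar> else 0) = 0"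
    proof
      fix t assume "t \<in> {-int n..int n} - {-int e..int e}"
      then have "e < nat \<bar>t\<bar>" by auto
      also have "\<dots> \<le> k * nat \<bar>t\<bar> ^ 2"
        using assms by (rule le_mult_power2)
      finally show "(if k * nat \<bar>t\<bar> ^ 2 = e then s ^ nat \<bar>t\<bar> else 0) = 0" by simp
    qed
  qed (use \<open>e < Suc n\<close> in auto)
  then show "theta_poly s k n $ e = theta s k $ e"
    by (simp add: theta_def)
qed

definition theta_tail :: "'a::comm_ring_1 \<Rightarrow> nat \<Rightarrow> 'a fps" where
  "theta_tail s k = Abs_fps (\<lambda>e. \<Sum>m=1..e. if k * m\<^sup>2 = e then s ^ m else 0)"

lemma sum_symmetric_int_interval:
  fixes f :: "nat \<Rightarrow> 'a::comm_ring_1"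
  shows "(\<Sum>t\<in>{-int e..int e}. f (nat \<bar>t\<bar>)) = f 0 + 2 * (\<Sum>m=1..e. f m)"
proof (induction e)
  case (Suc e)
  let ?g = "\<lambda>t. f (nat \<bar>t\<bar>)"
  have "{-int (Suc e)..int (Suc e)} = insert (- int (Suc e)) (insert (int (Suc e)) {-int e..int e})"
    by auto
  then have "(\<Sum>t\<in>{-int (Suc e)..int (Suc e)}. ?g t) =
      ?g (- int (Suc e)) + (?g (int (Suc e)) + (\<Sum>t\<in>{-int e..int e}. ?g t))"
    by (simp only: sum.insert finite_insert finite_atLeastAtMost_int) auto
  then show ?case
    using Suc by (simp add: algebra_simps del: of_nat_Suc)
qed simp

lemma theta_eq_one_plus_tail: "theta s k = 1 + 2 * theta_tail s k"
proof (rule fps_ext)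
  fix e
  have "theta s k $ e = (\<Sum>t\<in>{-int e..int e}. if k * nat \<bar>t\<bar> ^ 2 = e then s ^ nat \<bar>t\<bar> else 0)"
    by (simp add: theta_def)
  also have "\<dots> = (1 + 2 * theta_tail s k) $ e"
    by (simp only: sum_symmetric_int_interval[of "\<lambda>m. if k * m\<^sup>2 = e then s ^ m else 0"])
      (simp add: theta_tail_def fps_numeral_fps_const)
  finally show "theta s k $ e = (1 + 2 * theta_tail s k) $ e" .
qed

lemma theta_tail_nth_0 [simp]: "theta_tail s k $ 0 = 0"
  by (simp add: theta_tail_def)

section \<open>Gauss's identity for eta quotients\<close>

lemma fps_mult_one_minus_X_power_nth:
  fixes F :: "'a::comm_ring_1 fps"
  shows "e < N \<Longrightarrow> (F * (1 - fps_X ^ N)) $ e = F $ e"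
  by (simp add: right_diff_distrib fps_X_power_mult_right_nth)

lemma qpoch_X_power_nth:
  assumes "k \<ge> 1" "e \<le> a"
  shows "qpoch (fps_X ^ k) a $ e = eta_fps k $ e"
  using assms(2)
proof (induction a rule: dec_induct)
  case base
  show ?case by (simp add: eta_fps_def qpoch_def power_mult)
next
  case (step a)
  have "e < k * Suc a"
    using step.hyps assms(1) by (metis le_imp_less_Suc mult_le_mono1 mult_1 order.strict_trans2)
  have "qpoch (fps_X ^ k :: rat fps) (Suc a) $ e = (qpoch (fps_X ^ k) a * (1 - fps_X ^ (k * Suc a))) $ e"
    by (simp only: qpoch_Suc power_mult)
  also have "\<dots> = qpoch (fps_X ^ k) a $ e"
    by (rule fps_mult_one_minus_X_power_nth) fact
  finally show ?case
    using step.IH by simp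
qed

lemma fps_eq_below_qpoch_eta:
  "k \<ge> 1 \<Longrightarrow> D \<le> Suc a \<Longrightarrow> fps_eq_below D (qpoch (fps_X ^ k) a) (eta_fps k)"
  by (simp add: fps_eq_below_def qpoch_X_power_nth)

lemma eta_fps_nth_0 [simp]: "eta_fps k $ 0 = 1"
  by (simp add: eta_fps_def)

lemma fps_eq_below_qbinom_eta:
  assumes "k \<ge> 1" "j \<le> M" "D \<le> j" "D \<le> M - j"
  shows "fps_eq_below D (qbinom (fps_X ^ k) M j * eta_fps k) 1"
proof -
  let ?F = "eta_fps k"
  have "fps_eq_below D (qbinom (fps_X ^ k) M j * qpoch (fps_X ^ k) j * qpoch (fps_X ^ k) (M - j))
      (qbinom (fps_X ^ k) M j * ?F * ?F)"
    using assms by (intro fps_eq_below_mult fps_eq_below_qpoch_eta) simp_all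
  then have "fps_eq_below D (qbinom (fps_X ^ k) M j * ?F * ?F) (qpoch (fps_X ^ k) M)"
    unfolding qbinom_mult_qpoch[OF assms(2)] by (rule fps_eq_below_sym)
  also have "fps_eq_below D (qpoch (fps_X ^ k) M) ?F"
    using assms by (intro fps_eq_below_qpoch_eta) simp_all
  finally have "fps_eq_below D (?F * (qbinom (fps_X ^ k) M j * ?F)) (?F * 1)"
    by (simp add: mult_ac)
  then show ?thesis
    by (rule fps_eq_below_cancel) simp
qed

text \<open>Gauss's identity is the limit of \<open>finite_gauss_identity\<close> for \<open>x = q^k\<close>: below any
  fixed degree the Gaussian binomial coefficients in \<open>q^(2k)\<close> become \<open>1 / f_(2k)\<close>.\<close>

lemma fps_eq_below_gauss_term:
  assumes k: "k \<ge> 1" and "2 * D \<le> n" "\<bar>t\<bar> \<le> int n"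
  shows "fps_eq_below D (qpoch (fps_X ^ (2 * k)) n *
      (fps_X ^ (k * nat \<bar>t\<bar> ^ 2) * qbinom (fps_X ^ (2 * k)) (2 * n) (nat (int n + t))))
    (fps_X ^ (k * nat \<bar>t\<bar> ^ 2) :: rat fps)"
proof -
  let ?P = "qpoch (fps_X ^ (2 * k)) n :: rat fps"
  let ?Q = "qbinom (fps_X ^ (2 * k)) (2 * n) (nat (int n + t)) :: rat fps"
  let ?m = "fps_X ^ (k * nat \<bar>t\<bar> ^ 2) :: rat fps"
  show ?thesis
  proof (cases "D \<le> k * nat \<bar>t\<bar> ^ 2")
    case True
    then have "fps_eq_below D (?m * (?P * ?Q)) 0" "fps_eq_below D (?m * 1) 0"
      by (simp_all only: fps_eq_below_X_power_mult)
    then show ?thesis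
      by (simp add: fps_eq_below_def mult_ac)
  next
    case False
    then have "nat \<bar>t\<bar> < D"
      using le_mult_power2[OF k] by (meson le_less_trans not_le)
    then have "fps_eq_below D (?Q * eta_fps (2 * k)) 1"
      using k assms by (intro fps_eq_below_qbinom_eta) auto
    moreover have "fps_eq_below D ?P (eta_fps (2 * k))"
      using k assms by (intro fps_eq_below_qpoch_eta) auto
    ultimately have "fps_eq_below D (?P * ?Q) 1"
      using fps_eq_below_mult[of D ?P "eta_fps (2 * k)" ?Q ?Q]
      by (simp add: fps_eq_below_def mult.commute)
    then have "fps_eq_below D (?m * (?P * ?Q)) (?m * 1)"
      by (rule fps_eq_below_mult[OF fps_eq_below_refl])
    then show ?thesis
      by (simp add: mult_ac)
  qed
qed

theorem eta_fps_square:
  assumes k: "k \<ge> 1"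
  shows "eta_fps k ^ 2 = eta_fps (2 * k) * theta (-1) k"
  unfolding fps_eq_iff_eq_below
proof
  fix D :: nat
  define n where "n = 2 * D"
  define x :: "rat fps" where "x = fps_X ^ k"
  define P where "P = qpoch (x\<^sup>2) n"
  define Q where "Q t = qbinom (x\<^sup>2) (2 * n) (nat (int n + t))" for t
  have x_nonzero: "x \<noteq> 0"
    by (simp add: x_def)
  have x2: "x\<^sup>2 = fps_X ^ (2 * k)"
    by (simp add: x_def mult.commute power_mult)
  have "fps_eq_below D (eta_fps k ^ 2) (qpoch x (2 * n) ^ 2)"
    unfolding x_def n_def
    by (intro fps_eq_below_power fps_eq_below_sym[OF fps_eq_below_qpoch_eta]) (use k in simp_all)
  also have "qpoch x (2 * n) ^ 2 = P * (\<Sum>t\<in>{-int n..int n}. P * ((-1) ^ nat \<bar>t\<bar> * x ^ (nat \<bar>t\<bar> ^ 2) * Q t))"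
    unfolding qpoch_double P_def Q_def power_mult_distrib finite_gauss_identity[OF x_nonzero]
    by (simp add: sum_distrib_left power2_eq_square mult_ac)
  also have "fps_eq_below D \<dots> (eta_fps (2 * k) * theta_poly (-1) k n)"
    unfolding theta_poly_def
  proof (rule fps_eq_below_mult[OF _ fps_eq_below_sum])
    show "fps_eq_below D P (eta_fps (2 * k))"
      unfolding P_def x2 n_def by (rule fps_eq_below_qpoch_eta) (use k in simp_all)
  next
    fix t assume "t \<in> {-int n..int n}"
    then have "fps_eq_below D (P * (fps_X ^ (k * nat \<bar>t\<bar> ^ 2) * Q t)) (fps_X ^ (k * nat \<bar>t\<bar> ^ 2))"
      unfolding P_def Q_def x2 using k by (intro fps_eq_below_gauss_term) (auto simp: n_def)
    then have "fps_eq_below D (fps_const ((-1) ^ nat \<bar>t\<bar>) * (P * (fps_X ^ (k * nat \<bar>t\<bar> ^ 2) * Q t)))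
        (fps_const ((-1) ^ nat \<bar>t\<bar>) * fps_X ^ (k * nat \<bar>t\<bar> ^ 2))"
      by (rule fps_eq_below_mult[OF fps_eq_below_refl])
    then show "fps_eq_below D (P * ((-1) ^ nat \<bar>t\<bar> * x ^ (nat \<bar>t\<bar> ^ 2) * Q t))
        (fps_const ((-1) ^ nat \<bar>t\<bar>) * fps_X ^ (k * nat \<bar>t\<bar> ^ 2))"
      by (simp add: x_def mult_ac flip: power_mult fps_const_power fps_const_neg)
  qed
  also have "fps_eq_below D (eta_fps (2 * k) * theta_poly (-1) k n) (eta_fps (2 * k) * theta (-1) k)"
    using k by (intro fps_eq_below_mult fps_eq_below_refl fps_eq_below_mono[OF fps_eq_below_theta_poly])
      (simp_all add: n_def)
  finally show "fps_eq_below D (eta_fps k ^ 2) (eta_fps (2 * k) * theta (-1) k)" .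
qed

section \<open>A product identity for theta series\<close>

lemma abs_le_power2_int: "\<bar>x::int\<bar> \<le> x\<^sup>2"
proof (cases "x = 0")
  case False
  then have "\<bar>x\<bar> * 1 \<le> \<bar>x\<bar> * \<bar>x\<bar>"
    by (intro mult_left_mono) auto
  then show ?thesis
    by (simp add: power2_eq_square)
qed simp

lemma neg_one_power_nat_abs: "(-1 :: 'a::ring_1) ^ nat \<bar>x\<bar> = (if even x then 1 else -1)"
  by (simp add: minus_one_power_iff even_nat_iff)

lemma binary_form_rep_bound:
  assumes "k \<ge> 1" "k' \<ge> 1" "int k * a\<^sup>2 + int k' * b\<^sup>2 = int e"
  shows "\<bar>a\<bar> \<le> int e \<and> \<bar>b\<bar> \<le> int e"
proof -
  have "\<bar>a\<bar> \<le> int k * a\<^sup>2" "\<bar>b\<bar> \<le> int k' * b\<^sup>2"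
    using assms(1,2) abs_le_power2_int[of a] abs_le_power2_int[of b]
    by (simp_all add: order_trans[OF _ mult_right_mono[of 1]])
  moreover have "0 \<le> int k * a\<^sup>2" "0 \<le> int k' * b\<^sup>2"
    by simp_all
  ultimately show ?thesis
    using assms(3) by linarith
qed

lemma theta_mult_nth:
  assumes "k \<ge> 1" "k' \<ge> 1"
  shows "(theta s k * theta s' k') $ e =
    (\<Sum>(a, b)\<in>{(a, b). int k * a\<^sup>2 + int k' * b\<^sup>2 = int e}. s ^ nat \<bar>a\<bar> * s' ^ nat \<bar>b\<bar>)"
proof -
  let ?B = "{-int e..int e} \<times> {-int e..int e}"
  let ?rep = "\<lambda>(a, b). k * nat \<bar>a\<bar> ^ 2 + k' * nat \<bar>b\<bar> ^ 2 = e"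
  let ?w = "\<lambda>(a, b). s ^ nat \<bar>a\<bar> * s' ^ nat \<bar>b\<bar>"
  have "(theta s k * theta s' k') $ e = (theta_poly s k e * theta_poly s' k' e) $ e"
    using fps_eq_below_mult[OF fps_eq_below_theta_poly[OF assms(1), of e s]
        fps_eq_below_theta_poly[OF assms(2), of e s']]
    by (simp add: fps_eq_below_def)
  also have "theta_poly s k e * theta_poly s' k' e =
      (\<Sum>x\<in>?B. fps_const (?w x) * fps_X ^ (k * nat \<bar>fst x\<bar> ^ 2 + k' * nat \<bar>snd x\<bar> ^ 2))"
    unfolding theta_poly_def sum_product sum.cartesian_product
    by (rule sum.cong) (auto simp: power_add mult_ac simp flip: fps_const_mult)
  also have "\<dots> $ e = (\<Sum>x\<in>?B. if ?rep x then ?w x else 0)"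
    unfolding fps_sum_monomials_nth by (rule sum.cong) auto
  also have "\<dots> = (\<Sum>x\<in>{x\<in>?B. ?rep x}. ?w x)"
    by (rule sum.inter_filter[symmetric]) simp
  also have "{x\<in>?B. ?rep x} = {(a, b). int k * a\<^sup>2 + int k' * b\<^sup>2 = int e}"
  proof -
    have "?rep (a, b) \<longleftrightarrow> int k * a\<^sup>2 + int k' * b\<^sup>2 = int e" for a b
    proof -
      have "int (k * nat \<bar>a\<bar> ^ 2 + k' * nat \<bar>b\<bar> ^ 2) = int k * a\<^sup>2 + int k' * b\<^sup>2"
        by simp
      then show ?thesis
        by (metis (mono_tags, lifting) case_prod_conv of_nat_eq_iff)
    qed
    then show ?thesis
      using binary_form_rep_bound[OF assms] by (fastforce simp: abs_le_iff)
  qed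
  finally show ?thesis .
qed

lemma sum_two_squares_odd_part:
  "(\<Sum>(a, b)\<in>{(a, b). a\<^sup>2 + b\<^sup>2 = e \<and> odd (a + b)}. (-1 :: 'a::linordered_idom) ^ nat \<bar>b\<bar>) = 0"
proof -
  let ?S = "{(a, b). a\<^sup>2 + b\<^sup>2 = e \<and> odd (a + b)}"
  let ?f = "\<lambda>(a, b). (-1 :: 'a) ^ nat \<bar>b\<bar>"
  have "(\<Sum>p\<in>?S. ?f p) = (\<Sum>p\<in>?S. ?f (prod.swap p))"
    by (rule sum.reindex_bij_witness[where i = prod.swap and j = prod.swap]) (auto simp: add.commute)
  also have "\<dots> = (\<Sum>p\<in>?S. - ?f p)"
    by (rule sum.cong) (auto simp: neg_one_power_nat_abs split: if_splits)
  finally show ?thesis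
    by (simp add: sum_negf)
qed

lemma sum_two_squares_even_part:
  "(\<Sum>(a, b)\<in>{(a, b). a\<^sup>2 + b\<^sup>2 = e \<and> even (a + b)}. (-1 :: 'a::comm_ring_1) ^ nat \<bar>b\<bar>) =
    (\<Sum>(c, d)\<in>{(c, d). 2 * c\<^sup>2 + 2 * d\<^sup>2 = e}. (-1) ^ nat \<bar>c\<bar> * (-1) ^ nat \<bar>d\<bar>)"
proof (rule sum.reindex_bij_witness[symmetric, where
      i = "\<lambda>(a, b). ((a + b) div 2, (a - b) div 2)" and j = "\<lambda>(c, d). (c + d, c - d)"])
  fix p assume "p \<in> {(a, b). a\<^sup>2 + b\<^sup>2 = e \<and> even (a + b)}"
  then obtain a b where p: "p = (a, b)" "a\<^sup>2 + b\<^sup>2 = e" "even (a + b)"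
    by auto
  then have "even (a - b)"
    by presburger
  then obtain u v where uv: "a + b = 2 * u" "a - b = 2 * v"
    using p(3) by (meson dvdE)
  then have ab: "a = u + v" "b = u - v"
    by linarith+
  then show "(case case p of (a, b) \<Rightarrow> ((a + b) div 2, (a - b) div 2) of (c, d) \<Rightarrow> (c + d, c - d)) = p"
    using p(1) uv by simp
  have "2 * ((a + b) div 2)\<^sup>2 + 2 * ((a - b) div 2)\<^sup>2 = a\<^sup>2 + b\<^sup>2"
    unfolding uv by (simp add: ab power2_eq_square algebra_simps)
  with p show "(case p of (a, b) \<Rightarrow> ((a + b) div 2, (a - b) div 2)) \<in> {(c, d). 2 * c\<^sup>2 + 2 * d\<^sup>2 = e}"
    by simp
next
  fix q assume "q \<in> {(c, d). 2 * c\<^sup>2 + 2 * d\<^sup>2 = e}"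
  then obtain c d where q: "q = (c, d)" "2 * c\<^sup>2 + 2 * d\<^sup>2 = e"
    by auto
  then show "(case case q of (c, d) \<Rightarrow> (c + d, c - d) of (a, b) \<Rightarrow> ((a + b) div 2, (a - b) div 2)) = q"
    by auto
  have "(c + d)\<^sup>2 + (c - d)\<^sup>2 = 2 * c\<^sup>2 + 2 * d\<^sup>2"
    by (simp add: power2_eq_square algebra_simps)
  with q show "(case q of (c, d) \<Rightarrow> (c + d, c - d)) \<in> {(a, b). a\<^sup>2 + b\<^sup>2 = e \<and> even (a + b)}"
    by simp
  show "(case case q of (c, d) \<Rightarrow> (c + d, c - d) of (a, b) \<Rightarrow> (-1 :: 'a) ^ nat \<bar>b\<bar>) =
      (case q of (c, d) \<Rightarrow> (-1) ^ nat \<bar>c\<bar> * (-1) ^ nat \<bar>d\<bar>)"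
    using q by (simp add: neg_one_power_nat_abs)
qed

lemma signed_sum_two_squares:
  "(\<Sum>(a, b)\<in>{(a, b). a\<^sup>2 + b\<^sup>2 = int e}. (-1 :: 'a::linordered_idom) ^ nat \<bar>b\<bar>) =
    (\<Sum>(c, d)\<in>{(c, d). 2 * c\<^sup>2 + 2 * d\<^sup>2 = int e}. (-1) ^ nat \<bar>c\<bar> * (-1) ^ nat \<bar>d\<bar>)"
proof -
  let ?L = "{(a, b). a\<^sup>2 + b\<^sup>2 = int e}"
  let ?f = "\<lambda>(a, b). (-1 :: 'a) ^ nat \<bar>b\<bar>"
  have "?L \<subseteq> {-int e..int e} \<times> {-int e..int e}"
    using binary_form_rep_bound[of 1 1] by (fastforce simp: abs_le_iff)
  then have "finite ?L"
    by (rule finite_subset) simp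
  moreover have "?L = {(a, b). a\<^sup>2 + b\<^sup>2 = int e \<and> even (a + b)} \<union> {(a, b). a\<^sup>2 + b\<^sup>2 = int e \<and> odd (a + b)}"
    by auto
  ultimately have "(\<Sum>p\<in>?L. ?f p) = (\<Sum>p\<in>{(a, b). a\<^sup>2 + b\<^sup>2 = int e \<and> even (a + b)}. ?f p) +
      (\<Sum>p\<in>{(a, b). a\<^sup>2 + b\<^sup>2 = int e \<and> odd (a + b)}. ?f p)"
    by (auto intro: sum.union_disjoint)
  then show ?thesis
    by (simp only: sum_two_squares_odd_part sum_two_squares_even_part add_0_right)
qed

theorem theta_product:
  "theta (1::rat) 1 * theta (-1) 1 = theta (-1) 2 ^ 2"
proof (rule fps_ext)
  fix e
  have "(theta (1::rat) 1 * theta (-1) 1) $ e = (\<Sum>(a, b)\<in>{(a, b). a\<^sup>2 + b\<^sup>2 = int e}. (-1 :: rat) ^ nat \<bar>b\<bar>)"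
    by (subst theta_mult_nth) simp_all
  also have "\<dots> = (\<Sum>(c, d)\<in>{(c, d). 2 * c\<^sup>2 + 2 * d\<^sup>2 = int e}. (-1) ^ nat \<bar>c\<bar> * (-1) ^ nat \<bar>d\<bar>)"
    by (rule signed_sum_two_squares)
  also have "\<dots> = (theta (-1) 2 ^ 2) $ e"
    unfolding power2_eq_square by (subst theta_mult_nth) (simp_all add: power2_eq_square)
  finally show "(theta (1::rat) 1 * theta (-1) 1) $ e = (theta (-1) 2 ^ 2) $ e" .
qed

section \<open>The generating function as a theta quotient\<close>

lemma eta_fps_nonzero: "eta_fps k \<noteq> 0"
  using eta_fps_nth_0[of k] by (metis fps_zero_nth zero_neq_one)

lemma overcubic_gf_mult_theta_power:
  assumes "c \<ge> 2"
  shows "overcubic_gf c * theta (-1) 2 ^ (c + 1) = theta 1 1"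
proof -
  let ?gf = "overcubic_gf c" and ?R = "theta (-1 :: rat) 2" and ?\<Psi> = "theta (-1 :: rat) 1"
  have "?gf * (eta_fps 1 ^ 2 * eta_fps 2 ^ (2 * c - 3)) =
      eta_fps 4 ^ (c - 1) * (inverse (eta_fps 1 ^ 2) * eta_fps 1 ^ 2) *
      (inverse (eta_fps 2 ^ (2 * c - 3)) * eta_fps 2 ^ (2 * c - 3))"
    using assms by (simp add: overcubic_gf_def mult_ac)
  also have "\<dots> = eta_fps 4 ^ (c - 1)"
    by (simp add: inverse_mult_eq_1)
  also have "eta_fps 1 ^ 2 * eta_fps 2 ^ (2 * c - 3) = ?\<Psi> * eta_fps 2 ^ (2 * (c - 1))"
  proof -
    have "2 * (c - 1) = Suc (2 * c - 3)"
      using assms by simp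
    then show ?thesis
      using eta_fps_square[of 1] by (simp add: mult_ac)
  qed
  also have "eta_fps 2 ^ (2 * (c - 1)) = eta_fps 4 ^ (c - 1) * ?R ^ (c - 1)"
    using eta_fps_square[of 2] by (simp add: power_mult power_mult_distrib)
  finally have "eta_fps 4 ^ (c - 1) * (?gf * ?\<Psi> * ?R ^ (c - 1)) = eta_fps 4 ^ (c - 1) * 1"
    by (simp add: mult_ac)
  then have inverse_power: "?gf * ?\<Psi> * ?R ^ (c - 1) = 1"
    using mult_left_cancel[OF power_not_zero[OF eta_fps_nonzero]] by blast
  have "?R ^ (c + 1) = ?R ^ (c - 1) * (theta 1 1 * ?\<Psi>)"
    using assms theta_product by (simp flip: power_add)
  then have "?gf * ?R ^ (c + 1) = (?gf * ?\<Psi> * ?R ^ (c - 1)) * theta 1 1"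
    by (simp only: mult_ac)
  then show ?thesis
    by (simp only: inverse_power mult_1)
qed

lemma overcubic_gf_eq_theta_quotient:
  assumes "c \<ge> 2"
  shows "overcubic_gf c = theta 1 1 * theta (-1) 2 * inverse (theta (-1) 2) ^ (c + 2)"
proof -
  let ?R = "theta (-1 :: rat) 2"
  have "?R * inverse ?R = 1"
    by (simp add: inverse_mult_eq_1')
  then have "overcubic_gf c = overcubic_gf c * (?R * inverse ?R) ^ (c + 2)"
    by simp
  also have "\<dots> = overcubic_gf c * ?R ^ (c + 1) * ?R * inverse ?R ^ (c + 2)"
    by (simp add: power_mult_distrib mult_ac)
  also have "overcubic_gf c * ?R ^ (c + 1) = theta 1 1"
    by (rule overcubic_gf_mult_theta_power[OF assms])
  finally show ?thesis .
qed

section \<open>Congruences between integral power series\<close>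

lemma fps_inverse_nth_recurrence:
  fixes F :: "'a::field fps"
  assumes "F $ 0 = 1" "n > 0"
  shows "inverse F $ n = - (\<Sum>i=1..n. F $ i * inverse F $ (n - i))"
proof -
  have "0 = (F * inverse F) $ n"
    using assms by (simp add: inverse_mult_eq_1')
  also have "\<dots> = F $ 0 * inverse F $ n + (\<Sum>i=1..n. F $ i * inverse F $ (n - i))"
    unfolding fps_mult_nth by (subst sum.atLeast_Suc_atMost) auto
  finally show ?thesis
    using assms(1) by (simp add: eq_neg_iff_add_eq_0 add.commute)
qed

definition fps_integral :: "'a::ring_1 fps \<Rightarrow> bool" where
  "fps_integral F \<longleftrightarrow> (\<forall>n. F $ n \<in> \<int>)"

lemma fps_integral_0 [intro]: "fps_integral 0"
  and fps_integral_1 [intro]: "fps_integral 1"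
  and fps_integral_of_int [intro]: "fps_integral (of_int c)"
  by (auto simp: fps_integral_def simp flip: fps_of_int)

lemma fps_integral_add [intro]: "fps_integral F \<Longrightarrow> fps_integral G \<Longrightarrow> fps_integral (F + G)"
  and fps_integral_diff [intro]: "fps_integral F \<Longrightarrow> fps_integral G \<Longrightarrow> fps_integral (F - G)"
  and fps_integral_minus [intro]: "fps_integral F \<Longrightarrow> fps_integral (- F)"
  by (auto simp: fps_integral_def)

lemma fps_integral_mult [intro]: "fps_integral F \<Longrightarrow> fps_integral G \<Longrightarrow> fps_integral (F * G)"
  by (auto simp: fps_integral_def fps_mult_nth intro!: Ints_sum Ints_mult)

lemma fps_integral_numeral [intro]: "fps_integral (numeral n)"
  using fps_integral_of_int[of "numeral n"] by simp

lemma fps_integral_power [intro]: "fps_integral F \<Longrightarrow> fps_integral (F ^ n)"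
  by (induction n) auto

lemma fps_integral_inverse:
  fixes F :: "'a::field fps"
  assumes "fps_integral F" "F $ 0 = 1"
  shows "fps_integral (inverse F)"
  unfolding fps_integral_def
proof
  fix n show "inverse F $ n \<in> \<int>"
  proof (induction n rule: less_induct)
    case (less n)
    show ?case
    proof (cases "n = 0")
      case False
      then show ?thesis
        using assms less by (auto simp: fps_inverse_nth_recurrence fps_integral_def
            intro!: Ints_minus Ints_sum Ints_mult)
    qed (use assms in simp)
  qed
qed

lemma fps_integral_theta_tail: "s \<in> \<int> \<Longrightarrow> fps_integral (theta_tail s k)"
  unfolding fps_integral_def theta_tail_def by (auto intro!: Ints_sum Ints_power)

lemma fps_numeral_power_mult_nth [simp]:
  "((numeral c :: 'a::comm_ring_1 fps) ^ k * F) $ n = numeral c ^ k * F $ n"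
  by (simp add: fps_numeral_fps_const)

lemma fps_numeral_mult_nth [simp]:
  "((numeral c :: 'a::comm_ring_1 fps) * F) $ n = numeral c * F $ n"
  by (simp add: fps_numeral_fps_const)

definition fps_cong :: "int \<Rightarrow> 'a::ring_1 fps \<Rightarrow> 'a fps \<Rightarrow> bool" where
  "fps_cong d F G \<longleftrightarrow> (\<exists>H. fps_integral H \<and> F = G + of_int d * H)"

lemma fps_congI: "fps_integral H \<Longrightarrow> F = G + of_int d * H \<Longrightarrow> fps_cong d F G"
  by (auto simp: fps_cong_def)

lemma fps_cong_refl [simp]: "fps_cong d F F"
  by (rule fps_congI[of 0]) auto

lemma fps_cong_trans [trans]: "fps_cong d F G \<Longrightarrow> fps_cong d G H \<Longrightarrow> fps_cong d F H"
  unfolding fps_cong_def by (metis add.assoc distrib_left fps_integral_add)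

lemma fps_cong_mult_left:
  fixes F G H :: "'a::comm_ring_1 fps"
  shows "fps_integral H \<Longrightarrow> fps_cong d F G \<Longrightarrow> fps_cong d (H * F) (H * G)"
  unfolding fps_cong_def by (metis distrib_left fps_integral_mult mult.left_commute)

lemma fps_cong_power:
  fixes F G :: "'a::comm_ring_1 fps"
  assumes "fps_cong d F G" "fps_integral F" "fps_integral G"
  shows "fps_cong d (F ^ n) (G ^ n)"
proof (induction n)
  case (Suc n)
  have "fps_cong d (F * F ^ n) (F * G ^ n)"
    using Suc assms(2) by (rule fps_cong_mult_left[rotated])
  also have "fps_cong d (F * G ^ n) (G * G ^ n)"
    using fps_cong_mult_left[OF fps_integral_power[OF assms(3)] assms(1), of n]
    by (simp add: mult.commute)
  finally show ?case by simp
qed simp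

lemma fps_cong_dvd:
  assumes "d' dvd d" "fps_cong d F G"
  shows "fps_cong d' F G"
proof -
  obtain k where "d = d' * k"
    using assms(1) by (rule dvdE)
  moreover obtain H where "fps_integral H" "F = G + of_int d * H"
    using assms(2) by (auto simp: fps_cong_def)
  ultimately show ?thesis
    by (intro fps_congI[of "of_int k * H"]) (auto simp: mult.assoc)
qed

lemma fps_cong_nth: "fps_cong d F G \<Longrightarrow> \<exists>m. F $ n = G $ n + of_int (d * m)"
  unfolding fps_cong_def fps_integral_def
  by (auto simp flip: fps_of_int elim!: allE[of _ n] Ints_cases)

lemma fps_cong_square_lift:
  fixes X Y :: "'a::comm_ring_1 fps"
  assumes "fps_integral Y" "fps_cong (2 ^ (j + 1)) X (1 + 2 ^ j * Y)"
  shows "fps_cong (2 ^ (j + 2)) (X\<^sup>2) (1 + 2 ^ (j + 1) * Y + 2 ^ (2 * j) * Y\<^sup>2)"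
proof -
  obtain E where E: "fps_integral E" "X = 1 + 2 ^ j * Y + 2 ^ (j + 1) * E"
    using assms(2) by (auto simp: fps_cong_def)
  show ?thesis
  proof (rule fps_congI[of "E + 2 ^ j * Y * E + 2 ^ j * E\<^sup>2"])
    show "fps_integral (E + 2 ^ j * Y * E + 2 ^ j * E\<^sup>2)"
      using assms(1) E(1) by blast
    define t :: "'a fps" where "t = 2 ^ j"
    have "2 ^ (j + 1) = 2 * t" "2 ^ (2 * j) = t * t" "of_int (2 ^ (j + 2)) = 4 * t"
      by (simp_all only: t_def power_add mult_2 power_one_right of_int_power of_int_numeral)
        simp_all
    then show "X\<^sup>2 = 1 + 2 ^ (j + 1) * Y + 2 ^ (2 * j) * Y\<^sup>2 +
        of_int (2 ^ (j + 2)) * (E + 2 ^ j * Y * E + 2 ^ j * E\<^sup>2)"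
      unfolding E(2) t_def[symmetric] by (simp add: algebra_simps power2_eq_square)
  qed
qed

lemma inverse_one_plus_double_cong:
  fixes A :: "'a::field fps"
  assumes "fps_integral A" "A $ 0 = 0"
  shows "fps_cong 4 (inverse (1 + 2 * A)) (1 + 2 * A)"
proof -
  define S where "S = inverse (1 + 2 * A)"
  have "S * (1 + 2 * A) = 1"
    unfolding S_def using assms(2) by (simp add: inverse_mult_eq_1)
  then have S: "1 - 2 * A * S = S"
    by (simp add: algebra_simps)
  have "fps_integral S"
    unfolding S_def using assms by (intro fps_integral_inverse) auto
  then show ?thesis
    unfolding S_def[symmetric]
  proof (intro fps_congI[of "- (A * (1 - A * S))"])
    have "1 + 2 * A + of_int 4 * - (A * (1 - A * S)) = 1 - 2 * A * (1 - 2 * A * S)"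
      by (simp add: algebra_simps)
    then show "S = 1 + 2 * A + of_int 4 * - (A * (1 - A * S))"
      by (simp only: S)
  qed (use assms(1) in blast)
qed

lemma odd_power_cong_mod4:
  fixes X A :: "'a::comm_ring_1 fps"
  assumes "fps_integral X" "fps_integral A" "fps_cong 4 X (1 + 2 * A)" "odd m"
  shows "fps_cong 4 (X ^ m) (1 + 2 * A)"
proof -
  obtain q where m: "m = Suc (2 * q)"
    using assms(4) oddE by fastforce
  have "fps_cong 8 (X\<^sup>2) (1 + 4 * A + 4 * A\<^sup>2)"
    using fps_cong_square_lift[of A 1 X] assms(2,3) by simp
  then have "fps_cong 4 (X\<^sup>2) (1 + 4 * A + 4 * A\<^sup>2)"
    by (rule fps_cong_dvd[rotated]) simp
  also have "fps_cong 4 (1 + 4 * A + 4 * A\<^sup>2) 1"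
    using assms(2) by (intro fps_congI[of "A + A\<^sup>2"]) (auto simp: algebra_simps)
  finally have "fps_cong 4 ((X\<^sup>2) ^ q) (1 ^ q)"
    using assms(1) by (intro fps_cong_power) auto
  then have "fps_cong 4 (X * (X\<^sup>2) ^ q) X"
    using fps_cong_mult_left[OF assms(1)] by fastforce
  also note assms(3)
  finally show ?thesis
    by (simp add: m power_mult)
qed

lemma iterated_square_cong:
  fixes X Y :: "'a::comm_ring_1 fps"
  assumes "fps_integral X" "fps_integral Y" "fps_cong 4 X (1 + 2 * Y)"
  shows "fps_cong (2 ^ (s + 3)) (X ^ 2 ^ (s + 1)) (1 + 2 ^ (s + 2) * (Y + Y\<^sup>2))"
proof (induction s)
  case 0
  show ?case
    using fps_cong_square_lift[of Y 1 X] assms(2,3) by (simp add: algebra_simps power2_eq_square)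
next
  case (Suc s)
  let ?Q = "Y + Y\<^sup>2"
  have "fps_cong (2 ^ (s + 2 + 2)) ((X ^ 2 ^ (s + 1))\<^sup>2)
      (1 + 2 ^ (s + 2 + 1) * ?Q + 2 ^ (2 * (s + 2)) * ?Q\<^sup>2)"
    by (rule fps_cong_square_lift) (use assms(2) Suc.IH in \<open>auto simp: power_add mult.commute\<close>)
  also have "fps_cong (2 ^ (s + 2 + 2)) (1 + 2 ^ (s + 2 + 1) * ?Q + 2 ^ (2 * (s + 2)) * ?Q\<^sup>2)
      (1 + 2 ^ (s + 2 + 1) * ?Q)"
  proof (intro fps_congI[of "2 ^ s * ?Q\<^sup>2"])
    have exponent: "2 * (s + 2) = (s + 2 + 2) + s"
      by simp
    have "(2 :: 'a fps) ^ (2 * (s + 2)) = of_int (2 ^ (s + 2 + 2)) * 2 ^ s"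
      unfolding exponent power_add by simp
    then show "1 + 2 ^ (s + 2 + 1) * ?Q + 2 ^ (2 * (s + 2)) * ?Q\<^sup>2 =
        1 + 2 ^ (s + 2 + 1) * ?Q + of_int (2 ^ (s + 2 + 2)) * (2 ^ s * ?Q\<^sup>2)"
      by (simp add: mult.assoc)
  qed (use assms(2) in auto)
  also have "(X ^ 2 ^ (s + 1))\<^sup>2 = X ^ 2 ^ (Suc s + 1)"
    by (simp flip: power_mult)
  finally show ?case
    by (simp add: power_add mult.commute)
qed

lemma inverse_one_plus_double_power_cong:
  fixes A :: "'a::field fps"
  assumes A: "fps_integral A" "A $ 0 = 0" and "k \<ge> 2" "odd m"
  shows "fps_cong (2 ^ (k + 1)) (inverse (1 + 2 * A) ^ (2 ^ (k - 1) * m)) (1 + 2 ^ k * (A + A\<^sup>2))"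
proof -
  let ?S = "inverse (1 + 2 * A)"
  have S: "fps_integral ?S"
    using A by (intro fps_integral_inverse) auto
  have "fps_cong 4 ?S (1 + 2 * A)"
    using A by (rule inverse_one_plus_double_cong)
  then have "fps_cong 4 (?S ^ m) (1 + 2 * A)"
    using S A \<open>odd m\<close> by (intro odd_power_cong_mod4) auto
  then have "fps_cong (2 ^ (k - 2 + 3)) ((?S ^ m) ^ 2 ^ (k - 2 + 1)) (1 + 2 ^ (k - 2 + 2) * (A + A\<^sup>2))"
    using S A by (intro iterated_square_cong) auto
  moreover have "k - 2 + 3 = k + 1" "k - 2 + 1 = k - 1" "k - 2 + 2 = k"
    using \<open>k \<ge> 2\<close> by simp_all
  ultimately show ?thesis
    by (simp only: mult.commute[of "2 ^ (k - 1)" m] power_mult)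
qed

section \<open>Supports modulo 8\<close>

definition fps_supported_mod :: "nat \<Rightarrow> nat set \<Rightarrow> 'a::zero fps \<Rightarrow> bool" where
  "fps_supported_mod M T F \<longleftrightarrow> (\<forall>e. F $ e \<noteq> 0 \<longrightarrow> e mod M \<in> T)"

lemma fps_supported_mod_nth_eq_0: "fps_supported_mod M T F \<Longrightarrow> e mod M \<notin> T \<Longrightarrow> F $ e = 0"
  by (auto simp: fps_supported_mod_def)

lemma fps_supported_mod_mono: "fps_supported_mod M T F \<Longrightarrow> T \<subseteq> T' \<Longrightarrow> fps_supported_mod M T' F"
  by (auto simp: fps_supported_mod_def)

lemma fps_supported_mod_const: "0 \<in> T \<Longrightarrow> fps_supported_mod M T (fps_const c)"
  by (simp add: fps_supported_mod_def)

lemma fps_supported_mod_add: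
  fixes F G :: "'a::monoid_add fps"
  assumes "fps_supported_mod M T F" "fps_supported_mod M T G"
  shows "fps_supported_mod M T (F + G)"
  unfolding fps_supported_mod_def
proof (intro allI impI)
  fix e assume "(F + G) $ e \<noteq> 0"
  then have "F $ e \<noteq> 0 \<or> G $ e \<noteq> 0"
    by auto
  then show "e mod M \<in> T"
    using assms by (auto simp: fps_supported_mod_def)
qed

lemma fps_supported_mod_mult:
  fixes F G :: "'a::comm_semiring_0 fps"
  assumes "fps_supported_mod M T1 F" "fps_supported_mod M T2 G"
    and "\<And>a b. a \<in> T1 \<Longrightarrow> b \<in> T2 \<Longrightarrow> (a + b) mod M \<in> T"
  shows "fps_supported_mod M T (F * G)"
  unfolding fps_supported_mod_def
proof (intro allI impI)
  fix e assume "(F * G) $ e \<noteq> 0"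
  then obtain i where i: "i \<in> {0..e}" "F $ i * G $ (e - i) \<noteq> 0"
    using sum.neutral[of "{0..e}" "\<lambda>i. F $ i * G $ (e - i)"] unfolding fps_mult_nth by blast
  then have "F $ i \<noteq> 0" "G $ (e - i) \<noteq> 0"
    by auto
  then have "i mod M \<in> T1" "(e - i) mod M \<in> T2"
    using assms(1,2) by (simp_all add: fps_supported_mod_def)
  then have "(i mod M + (e - i) mod M) mod M \<in> T"
    by (rule assms(3))
  then show "e mod M \<in> T"
    using i(1) by (simp add: mod_add_eq)
qed

lemma fps_supported_mod_power:
  fixes F :: "'a::comm_semiring_1 fps"
  assumes "fps_supported_mod M T F" "0 \<in> T" "\<And>a b. a \<in> T \<Longrightarrow> b \<in> T \<Longrightarrow> (a + b) mod M \<in> T"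
  shows "fps_supported_mod M T (F ^ n)"
proof (induction n)
  case 0
  show ?case
    using fps_supported_mod_const[OF assms(2), of M 1] by simp
next
  case (Suc n)
  then show ?case
    using assms(1,3) by (simp add: fps_supported_mod_mult)
qed

lemma fps_supported_mod_inverse:
  fixes F :: "'a::field fps"
  assumes "fps_supported_mod M T F" "F $ 0 = 1"
    and "0 \<in> T" "\<And>a b. a \<in> T \<Longrightarrow> b \<in> T \<Longrightarrow> (a + b) mod M \<in> T"
  shows "fps_supported_mod M T (inverse F)"
  unfolding fps_supported_mod_def
proof (intro allI)
  fix e show "inverse F $ e \<noteq> 0 \<longrightarrow> e mod M \<in> T"
  proof (induction e rule: less_induct)
    case (less e)
    show ?case
    proof (cases "e = 0")
      case False
      show ?thesis
      proof
        assume "inverse F $ e \<noteq> 0"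
        then have "(\<Sum>i=1..e. F $ i * inverse F $ (e - i)) \<noteq> 0"
          using False assms(2) by (simp add: fps_inverse_nth_recurrence)
        then obtain i where i: "i \<in> {1..e}" "F $ i * inverse F $ (e - i) \<noteq> 0"
          using sum.neutral[of "{1..e}" "\<lambda>i. F $ i * inverse F $ (e - i)"] by blast
        then have "F $ i \<noteq> 0" "inverse F $ (e - i) \<noteq> 0" "e - i < e"
          by auto
        then have "i mod M \<in> T" "(e - i) mod M \<in> T"
          using assms(1) less[of "e - i"] by (simp_all add: fps_supported_mod_def)
        then have "(i mod M + (e - i) mod M) mod M \<in> T"
          by (rule assms(4))
        then show "e mod M \<in> T"
          using i(1) by (simp add: mod_add_eq)
      qed
    qed (use assms(3) in simp)
  qed
qed

lemma fps_supported_mod_theta_tail: "fps_supported_mod M (range (\<lambda>m. k * m\<^sup>2 mod M)) (theta_tail s k)"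
  unfolding fps_supported_mod_def
proof (intro allI impI)
  fix e assume "theta_tail s k $ e \<noteq> 0"
  then have "(\<Sum>m=1..e. if k * m\<^sup>2 = e then s ^ m else 0) \<noteq> 0"
    by (simp add: theta_tail_def)
  then obtain m where "(if k * m\<^sup>2 = e then s ^ m else 0) \<noteq> 0"
    using sum.neutral[of "{1..e}" "\<lambda>m. if k * m\<^sup>2 = e then s ^ m else 0"] by blast
  then have "e = k * m\<^sup>2"
    by (auto split: if_splits)
  then show "e mod M \<in> range (\<lambda>m. k * m\<^sup>2 mod M)"
    by blast
qed

lemma square_mod_8: "(m::nat)\<^sup>2 mod 8 \<in> {0, 1, 4}"
proof -
  have "m mod 8 < 8"
    by simp
  then have "m mod 8 \<in> {0, 1, 2, 3, 4, 5, 6, 7}"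
    by auto
  moreover have "m\<^sup>2 mod 8 = (m mod 8)\<^sup>2 mod 8"
    by (simp add: power_mod)
  ultimately show ?thesis
    by auto
qed

lemma double_square_mod_8: "(2 * (m::nat)\<^sup>2) mod 8 \<in> {0, 2}"
proof -
  have "m mod 4 < 4"
    by simp
  then have "m mod 4 \<in> {0, 1, 2, 3}"
    by auto
  moreover have "(2 * m\<^sup>2) mod 8 = 2 * ((m mod 4)\<^sup>2 mod 4)"
    using mod_mult_mult1[of 2 "m\<^sup>2" 4] by (simp add: power_mod)
  ultimately show ?thesis
    by auto
qed

lemma fps_supported_mod_theta_tail_1: "fps_supported_mod 8 {0, 1, 4} (theta_tail s 1)"
  using square_mod_8
  by (intro fps_supported_mod_mono[OF fps_supported_mod_theta_tail] image_subsetI) simp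

lemma fps_supported_mod_theta_tail_2: "fps_supported_mod 8 {0, 2} (theta_tail s 2)"
  by (intro fps_supported_mod_mono[OF fps_supported_mod_theta_tail] image_subsetI double_square_mod_8)

lemma fps_supported_mod_one_plus_double:
  fixes A :: "'a::comm_ring_1 fps"
  assumes "fps_supported_mod 8 {0, 2} A"
  shows "fps_supported_mod 8 {0, 2} (1 + 2 * A)"
proof -
  have "fps_supported_mod 8 {0} (2 :: 'a fps)"
    unfolding fps_numeral_fps_const by (rule fps_supported_mod_const) simp
  then have "fps_supported_mod 8 {0, 2} (2 * A)"
    by (rule fps_supported_mod_mult[OF _ assms]) auto
  then show ?thesis
    using fps_supported_mod_const[of "{0, 2}" 8 1] by (intro fps_supported_mod_add) simp_all
qed

lemma fps_supported_mod_mult_inverse_power: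
  fixes R :: "'a::field fps"
  assumes "fps_supported_mod 8 {0, 2} R" "R $ 0 = 1"
  shows "fps_supported_mod 8 {0, 2, 4, 6} (R * inverse R ^ N)"
proof -
  let ?even = "{0, 2, 4, 6 :: nat}"
  have even_closed: "(a + b) mod 8 \<in> ?even" if "a \<in> ?even" "b \<in> ?even" for a b
    using that by auto
  have R: "fps_supported_mod 8 ?even R"
    using assms(1) by (rule fps_supported_mod_mono) auto
  then have "fps_supported_mod 8 ?even (inverse R)"
    using assms(2) _ even_closed by (rule fps_supported_mod_inverse) simp
  then have "fps_supported_mod 8 ?even (inverse R ^ N)"
    using _ even_closed by (rule fps_supported_mod_power) simp
  then show ?thesis
    by (rule fps_supported_mod_mult[OF R _ even_closed])
qed

lemma fps_cong_mult_inverse_power: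
  fixes A B :: "'a::field fps"
  assumes A: "fps_integral A" "A $ 0 = 0" and B: "fps_integral B" and "k \<ge> 2" "odd m"
  shows "fps_cong (2 ^ (k + 1)) (B * ((1 + 2 * A) * inverse (1 + 2 * A) ^ (2 ^ (k - 1) * m)))
    (B * (1 + 2 * A) + 2 ^ k * (B * (A + A\<^sup>2)))"
proof -
  have "fps_cong (2 ^ (k + 1)) (B * (1 + 2 * A) * inverse (1 + 2 * A) ^ (2 ^ (k - 1) * m))
      (B * (1 + 2 * A) * (1 + 2 ^ k * (A + A\<^sup>2)))"
    using assms by (intro fps_cong_mult_left inverse_one_plus_double_power_cong) auto
  also have "fps_cong (2 ^ (k + 1)) (B * (1 + 2 * A) * (1 + 2 ^ k * (A + A\<^sup>2)))
      (B * (1 + 2 * A) + 2 ^ k * (B * (A + A\<^sup>2)))"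
    using A B by (intro fps_congI[of "A * B * (A + A\<^sup>2)"]) (auto simp: algebra_simps)
  finally show ?thesis
    by (simp only: mult.assoc)
qed

lemma fps_supported_mod_theta_tail_products:
  "fps_supported_mod 8 {0, 1, 2, 3, 4, 6} (theta_tail s 1 * (1 + 2 * theta_tail s' 2))"
  "fps_supported_mod 8 {0, 1, 2, 3, 4, 5, 6} (theta_tail s 1 * (theta_tail s' 2 + (theta_tail s' 2)\<^sup>2))"
proof -
  note sA = fps_supported_mod_theta_tail_2[of s'] and sB = fps_supported_mod_theta_tail_1[of s]
  show "fps_supported_mod 8 {0, 1, 2, 3, 4, 6} (theta_tail s 1 * (1 + 2 * theta_tail s' 2))"
    by (rule fps_supported_mod_mult[OF sB fps_supported_mod_one_plus_double[OF sA]]) auto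
  have "fps_supported_mod 8 {0, 2, 4} (theta_tail s' 2 + (theta_tail s' 2)\<^sup>2)"
    unfolding power2_eq_square
    by (intro fps_supported_mod_add fps_supported_mod_mono[OF sA] fps_supported_mod_mult[OF sA sA]) auto
  then show "fps_supported_mod 8 {0, 1, 2, 3, 4, 5, 6} (theta_tail s 1 * (theta_tail s' 2 + (theta_tail s' 2)\<^sup>2))"
    by (intro fps_supported_mod_mult[OF sB]) auto
qed

lemma theta_quotient_coeff_divisible:
  fixes k m d :: nat
  assumes k: "k \<ge> 2" and m: "odd m" and d: "d mod 8 = 5 \<or> d mod 8 = 7"
  defines "F \<equiv> theta 1 1 * theta (-1) 2 * inverse (theta (-1 :: rat) 2) ^ (2 ^ (k - 1) * m)"
  shows "\<exists>z. F $ d = of_int (2 ^ (k + 1) * z)"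
    and "d mod 8 = 7 \<Longrightarrow> \<exists>z. F $ d = of_int (2 ^ (k + 2) * z)"
proof -
  define A where "A = theta_tail (-1 :: rat) 2"
  define B where "B = theta_tail (1 :: rat) 1"
  define G where "G = (1 + 2 * A) * inverse (1 + 2 * A) ^ (2 ^ (k - 1) * m)"
  have F: "F = G + 2 * (B * G)"
    unfolding F_def G_def A_def B_def theta_eq_one_plus_tail by (simp add: algebra_simps)
  have A: "fps_integral A" "A $ 0 = 0" and B: "fps_integral B"
    unfolding A_def B_def by (simp_all add: fps_integral_theta_tail)
  obtain z where z: "(B * G) $ d = (B * (1 + 2 * A)) $ d + 2 ^ k * (B * (A + A\<^sup>2)) $ d + of_int (2 ^ (k + 1) * z)"
    using fps_cong_nth[OF fps_cong_mult_inverse_power[OF A B k m]] unfolding G_def by fastforce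
  have "fps_supported_mod 8 {0, 2, 4, 6} G"
    unfolding G_def A_def
    by (intro fps_supported_mod_mult_inverse_power fps_supported_mod_one_plus_double
        fps_supported_mod_theta_tail_2) simp
  then have Gd: "G $ d = 0"
    using d by (intro fps_supported_mod_nth_eq_0) auto
  have BRd: "(B * (1 + 2 * A)) $ d = 0"
    unfolding A_def B_def using d
    by (intro fps_supported_mod_nth_eq_0[OF fps_supported_mod_theta_tail_products(1)]) auto
  have "fps_integral (B * (A + A\<^sup>2))"
    using A B by blast
  then obtain w where w: "(B * (A + A\<^sup>2)) $ d = of_int w"
    unfolding fps_integral_def by (meson Ints_cases)
  have Fd: "F $ d = of_int (2 ^ (k + 1) * (w + 2 * z))"
    unfolding F fps_add_nth fps_numeral_mult_nth z Gd BRd w by (simp add: algebra_simps)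
  then show "\<exists>z. F $ d = of_int (2 ^ (k + 1) * z)"
    by blast
  assume "d mod 8 = 7"
  then have "w = 0"
    using w fps_supported_mod_nth_eq_0[OF fps_supported_mod_theta_tail_products(2)[of "1::rat" "-1"], of d]
    by (simp add: A_def B_def)
  then show "\<exists>z. F $ d = of_int (2 ^ (k + 2) * z)"
    using Fd by (intro exI[of _ z]) simp
qed

lemma overcubic_index_arith:
  fixes i k :: nat
  assumes "i \<ge> 1" "k \<ge> 3"
  shows "2 ^ k * i - 2 ^ (k - 1) - 2 + 2 = 2 ^ (k - 1) * (2 * i - 1)"
    and "2 ^ k * i - 2 ^ (k - 1) - 2 \<ge> 2"
proof -
  define P :: nat where "P = 2 ^ (k - 1)"
  have "2 ^ k * i = 2 * P * i"
    using assms(2) by (simp add: P_def power_Suc[symmetric])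
  moreover have "P \<ge> 4"
    using power_increasing[of 2 "k - 1" "2::nat"] assms(2) by (simp add: P_def)
  moreover have "P * (2 * i - 1) = 2 * P * i - P"
    by (simp add: algebra_simps diff_mult_distrib2)
  moreover have "2 * P * i \<ge> 2 * P"
    using assms(1) by simp
  ultimately show "2 ^ k * i - 2 ^ (k - 1) - 2 + 2 = 2 ^ (k - 1) * (2 * i - 1)"
    and "2 ^ k * i - 2 ^ (k - 1) - 2 \<ge> 2"
    unfolding P_def[symmetric] by linarith+
qed

theorem theorem1p7:
  fixes n i k :: nat
  assumes "i \<ge> 1" and "k \<ge> 3"
  shows "(\<exists>m::int. abar (2^k * i - 2^(k-1) - 2) (8*n+5) = of_int (2^(k+1) * m)) \<and>
         (\<exists>m::int. abar (2^k * i - 2^(k-1) - 2) (8*n+7) = of_int (2^(k+2) * m))"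
proof -
  let ?c = "2 ^ k * i - 2 ^ (k - 1) - 2"
  have "odd (2 * i - 1)"
    using assms(1) by presburger
  moreover have "abar ?c d = (theta 1 1 * theta (-1) 2 * inverse (theta (-1) 2) ^ (2 ^ (k - 1) * (2 * i - 1))) $ d"
    for d
    using overcubic_index_arith[OF assms]
    by (simp add: abar_def overcubic_gf_eq_theta_quotient del: diff_add_inverse2)
  ultimately show ?thesis
    using theta_quotient_coeff_divisible[of k "2 * i - 1"] assms(2) by simp
qed

end
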